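(* Let $n\ge1$, $\vec p,\vec q\in[0,1]^n$, and $N=\{1,\dots,n\}$. For nonempty $A\subseteq N$ put $\bar p_A=|A|^{-1}\sum_{i\in A}p_i$, $\bar q_A=|A|^{-1}\sum_{i\in A}q_i$, and $$\delta_A=\mathrm{TV}\big(\mathrm{Bin}(|A|,\bar p_A),\mathrm{Bin}(|A|,\bar q_A)\big).$$ If $I,J$ form a partition of $N$ with $I,J\ne\emptyset$, then $\delta_N\le2(\delta_I+\delta_J)$.
   Context: $\mathrm{Bin}(m,\theta)$ is the binomial distribution; $\mathrm{TV}(P,Q)=\frac12\sum_\omega|P(\omega)-Q(\omega)|$ is the total variation distance. *)

theory Defs
  imports "HOL-Analysis.Analysis"
begin

definition bin_pmf :: "nat \<Rightarrow> real \<Rightarrow> nat \<Rightarrow> real" where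
  "bin_pmf m \<theta> k = real (m choose k) * \<theta> ^ k * (1 - \<theta>) ^ (m - k)"

definition tv_bin :: "nat \<Rightarrow> real \<Rightarrow> real \<Rightarrow> real" where
  "tv_bin m a b = (1/2) * (\<Sum>k\<in>{0..m}. \<bar>bin_pmf m a k - bin_pmf m b k\<bar>)"

definition avg :: "(nat \<Rightarrow> real) \<Rightarrow> nat set \<Rightarrow> real" where
  "avg p A = (\<Sum>i\<in>A. p i) / real (card A)"

definition delta :: "(nat \<Rightarrow> real) \<Rightarrow> (nat \<Rightarrow> real) \<Rightarrow> nat set \<Rightarrow> real" where
  "delta p q A = tv_bin (card A) (avg p A) (avg q A)"

end

theory Submission
  imports Defs "HOL-Computational_Algebra.Polynomial"
begin

(* Identify Bin(m, a) with its generating polynomial (1 - a + a X)^m, so that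
   2 TV(Bin(m, a), Bin(m, b)) is the l1 norm of the coefficients of (1 - a + a X)^m - (1 - b + b X)^m.
   This norm is submultiplicative and equals 1 on generating polynomials, hence
   T(m) = TV(Bin(m, a), Bin(m, b)) is subadditive in m; deleting a uniformly random trial shows that
   T is nondecreasing, so T(j) <= (j/m + 1) T(m).
   For l = m/n, expanding (l (1 - a + a X) + (1 - l) (1 - c + c X))^n binomially bounds
   TV(Bin(n, l a + (1 - l) c), Bin(n, l b + (1 - l) c)) by E T(K) with K ~ Bin(n, l), which is at most
   (E K / m + 1) T(m) = 2 T(m).  The theorem follows by the triangle inequality through
   Bin(n, l b + (1 - l) c), where a, b and c, d are the averages of p, q over I and J. *)

definition poly_l1_norm :: "real poly \<Rightarrow> real" where
  "poly_l1_norm P = (\<Sum>k\<le>degree P. \<bar>coeff P k\<bar>)"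

lemma poly_l1_norm_eq_sum:
  assumes "degree P \<le> N"
  shows "poly_l1_norm P = (\<Sum>k\<le>N. \<bar>coeff P k\<bar>)"
  unfolding poly_l1_norm_def using assms
  by (intro sum.mono_neutral_left) (auto intro: coeff_eq_0)

lemma poly_l1_norm_nonneg: "poly_l1_norm P \<ge> 0"
  unfolding poly_l1_norm_def by (simp add: sum_nonneg)

lemma poly_l1_norm_0 [simp]: "poly_l1_norm 0 = 0"
  by (simp add: poly_l1_norm_def)

lemma poly_l1_norm_add_le: "poly_l1_norm (P + Q) \<le> poly_l1_norm P + poly_l1_norm Q"
proof -
  define N where "N = max (degree P) (degree Q)"
  have "poly_l1_norm (P + Q) = (\<Sum>k\<le>N. \<bar>coeff P k + coeff Q k\<bar>)"
    using degree_add_le[of P N Q] by (simp add: poly_l1_norm_eq_sum N_def)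
  also have "\<dots> \<le> (\<Sum>k\<le>N. \<bar>coeff P k\<bar> + \<bar>coeff Q k\<bar>)"
    by (intro sum_mono abs_triangle_ineq)
  also have "\<dots> = poly_l1_norm P + poly_l1_norm Q"
    by (simp add: sum.distrib poly_l1_norm_eq_sum[of P N] poly_l1_norm_eq_sum[of Q N] N_def)
  finally show ?thesis .
qed

lemma poly_l1_norm_smult: "poly_l1_norm (smult c P) = \<bar>c\<bar> * poly_l1_norm P"
  using degree_smult_le[of c P]
  by (simp add: poly_l1_norm_eq_sum[of _ "degree P"] poly_l1_norm_def abs_mult sum_distrib_left)

lemma poly_l1_norm_sum_le: "poly_l1_norm (\<Sum>i\<in>A. f i) \<le> (\<Sum>i\<in>A. poly_l1_norm (f i))"
proof (induction A rule: infinite_finite_induct)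
  case (insert i A)
  then show ?case
    using poly_l1_norm_add_le[of "f i" "sum f A"] by simp
qed simp_all

lemma poly_l1_norm_mult_le: "poly_l1_norm (P * Q) \<le> poly_l1_norm P * poly_l1_norm Q"
proof -
  define N where "N = degree P + degree Q"
  have "poly_l1_norm (P * Q) = (\<Sum>k\<le>N. \<bar>\<Sum>i\<le>k. coeff P i * coeff Q (k - i)\<bar>)"
    using degree_mult_le[of P Q] by (simp add: poly_l1_norm_eq_sum N_def coeff_mult)
  also have "\<dots> \<le> (\<Sum>k\<le>N. \<Sum>i\<le>k. \<bar>coeff P i\<bar> * \<bar>coeff Q (k - i)\<bar>)"
    by (intro sum_mono order.trans[OF sum_abs]) (simp add: abs_mult)
  also have "\<dots> = (\<Sum>(i, j)\<in>{(i, j). i + j \<le> N}. \<bar>coeff P i\<bar> * \<bar>coeff Q j\<bar>)"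
    by (rule sum.triangle_reindex_eq[symmetric])
  also have "\<dots> \<le> (\<Sum>(i, j)\<in>{..N} \<times> {..N}. \<bar>coeff P i\<bar> * \<bar>coeff Q j\<bar>)"
    by (intro sum_mono2) auto
  also have "\<dots> = poly_l1_norm P * poly_l1_norm Q"
    by (simp add: poly_l1_norm_eq_sum[of P N] poly_l1_norm_eq_sum[of Q N] N_def
        sum_product sum.cartesian_product)
  finally show ?thesis .
qed

definition bern_pgf :: "real \<Rightarrow> real poly" where
  "bern_pgf a = [:1 - a, a:]"

lemma degree_bern_pgf_power: "degree (bern_pgf a ^ m) \<le> m"
proof -
  have "degree (bern_pgf a) \<le> 1"
    by (simp add: bern_pgf_def)
  then show ?thesis
    using degree_power_le[of "bern_pgf a" m] by (simp add: order_trans)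
qed

lemma coeff_bern_pgf_power: "coeff (bern_pgf a ^ m) k = bin_pmf m a k"
proof (cases "k \<le> m")
  case True
  then show ?thesis
    by (simp add: bern_pgf_def bin_pmf_def coeff_linear_poly_power)
next
  case False
  then show ?thesis
    using degree_bern_pgf_power[of a m] by (simp add: bin_pmf_def coeff_eq_0)
qed

lemma sum_bin_pmf: "(\<Sum>k\<le>m. bin_pmf m a k) = 1"
  using binomial_ring[of a "1 - a" m] by (simp add: bin_pmf_def mult.assoc)

lemma sum_bin_pmf_times_k: "(\<Sum>k\<le>m. bin_pmf m a k * real k) = real m * a"
proof (cases m)
  case (Suc m')
  have "bin_pmf (Suc m') a (Suc i) * real (Suc i) = real (Suc m') * a * bin_pmf m' a i" for i
  proof -
    have "real (Suc m' choose Suc i) * real (Suc i) = real (Suc m') * real (m' choose i)"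
      by (metis Suc_times_binomial mult.commute of_nat_mult)
    then show ?thesis
      by (simp add: bin_pmf_def mult_ac)
  qed
  then have "(\<Sum>k\<le>m. bin_pmf m a k * real k) = (\<Sum>i\<le>m'. real m * a * bin_pmf m' a i)"
    unfolding Suc by (subst sum.atMost_Suc_shift) simp
  then show ?thesis
    by (simp add: sum_bin_pmf flip: sum_distrib_left)
qed simp

lemma poly_l1_norm_bern_pgf_power:
  assumes "0 \<le> a" "a \<le> 1"
  shows "poly_l1_norm (bern_pgf a ^ m) = 1"
proof -
  have "poly_l1_norm (bern_pgf a ^ m) = (\<Sum>k\<le>m. bin_pmf m a k)"
    using assms degree_bern_pgf_power[of a m]
    by (simp add: poly_l1_norm_eq_sum[of _ m] coeff_bern_pgf_power bin_pmf_def)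
  then show ?thesis
    by (simp add: sum_bin_pmf)
qed

lemma tv_bin_eq_poly_l1_norm: "tv_bin m a b = poly_l1_norm (bern_pgf a ^ m - bern_pgf b ^ m) / 2"
proof -
  have "degree (bern_pgf a ^ m - bern_pgf b ^ m) \<le> m"
    by (meson degree_bern_pgf_power degree_diff_le)
  then show ?thesis
    by (simp add: poly_l1_norm_eq_sum tv_bin_def coeff_bern_pgf_power atLeast0AtMost)
qed

lemma tv_bin_nonneg: "tv_bin m a b \<ge> 0"
  by (simp add: tv_bin_eq_poly_l1_norm poly_l1_norm_nonneg)

lemma tv_bin_triangle: "tv_bin m a c \<le> tv_bin m a b + tv_bin m b c"
  unfolding tv_bin_def sum.distrib[symmetric] distrib_left[symmetric]
  by (intro mult_left_mono sum_mono) auto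

lemma poly_l1_norm_bern_pgf_diff_mult_le:
  assumes "0 \<le> c" "c \<le> 1"
  shows "poly_l1_norm ((bern_pgf a ^ k - bern_pgf b ^ k) * bern_pgf c ^ j) \<le> 2 * tv_bin k a b"
  using poly_l1_norm_mult_le[of "bern_pgf a ^ k - bern_pgf b ^ k" "bern_pgf c ^ j"] assms
  by (simp add: poly_l1_norm_bern_pgf_power tv_bin_eq_poly_l1_norm)

lemma tv_bin_add_le:
  assumes "0 \<le> a" "a \<le> 1" "0 \<le> b" "b \<le> 1"
  shows "tv_bin (j + l) a b \<le> tv_bin j a b + tv_bin l a b"
proof -
  let ?A = "bern_pgf a" and ?B = "bern_pgf b"
  have "?A ^ (j + l) - ?B ^ (j + l) = (?A ^ j - ?B ^ j) * ?A ^ l + (?A ^ l - ?B ^ l) * ?B ^ j"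
    by (simp add: power_add algebra_simps)
  then have "poly_l1_norm (?A ^ (j + l) - ?B ^ (j + l))
      \<le> poly_l1_norm ((?A ^ j - ?B ^ j) * ?A ^ l) + poly_l1_norm ((?A ^ l - ?B ^ l) * ?B ^ j)"
    by (simp only: poly_l1_norm_add_le)
  also have "\<dots> \<le> 2 * tv_bin j a b + 2 * tv_bin l a b"
    using assms by (intro add_mono poly_l1_norm_bern_pgf_diff_mult_le)
  finally show ?thesis
    by (simp add: tv_bin_eq_poly_l1_norm)
qed

lemma tv_bin_mult_le:
  assumes "0 \<le> a" "a \<le> 1" "0 \<le> b" "b \<le> 1"
  shows "tv_bin (q * m) a b \<le> real q * tv_bin m a b"
proof (induction q)
  case 0
  then show ?case
    by (simp add: tv_bin_def bin_pmf_def)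
next
  case (Suc q)
  then show ?case
    using tv_bin_add_le[OF assms, of m "q * m"] by (simp add: algebra_simps)
qed

(* Bin(j, a) is Bin(j + 1, a) with one uniformly chosen trial deleted. *)
lemma bin_pmf_thinning:
  assumes "k \<le> j"
  shows "bin_pmf j a k = (real j + 1 - real k) / (real j + 1) * bin_pmf (Suc j) a k
     + (real k + 1) / (real j + 1) * bin_pmf (Suc j) a (Suc k)"
proof -
  have "real (Suc j - k) * real (Suc j choose k) = real (Suc j) * real (j choose k)"
    using binomial_absorb_comp[of "Suc j" k] by (simp only: diff_Suc_1 flip: of_nat_mult)
  then have choose_failure: "(real j + 1 - real k) * real (Suc j choose k) = (real j + 1) * real (j choose k)"
    using assms by (simp add: of_nat_diff add.commute)
  have "(real j + 1 - real k) * real (Suc j choose k) * (a ^ k * (1 - a) ^ (Suc j - k))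
      = (real j + 1) * real (j choose k) * (a ^ k * ((1 - a) * (1 - a) ^ (j - k)))"
    by (simp only: choose_failure Suc_diff_le[OF assms] power_Suc)
  then have failure_deleted: "(real j + 1 - real k) * bin_pmf (Suc j) a k = (real j + 1) * (1 - a) * bin_pmf j a k"
    unfolding bin_pmf_def by (simp only: mult_ac)
  have "real (Suc k) * real (Suc j choose Suc k) = real (Suc j) * real (j choose k)"
    by (simp only: Suc_times_binomial flip: of_nat_mult)
  then have choose_success: "(real k + 1) * real (Suc j choose Suc k) = (real j + 1) * real (j choose k)"
    by (simp add: add.commute del: binomial_Suc_Suc)
  have "(real k + 1) * real (Suc j choose Suc k) * (a ^ Suc k * (1 - a) ^ (Suc j - Suc k))
      = (real j + 1) * real (j choose k) * (a * a ^ k * (1 - a) ^ (j - k))"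
    by (simp only: choose_success diff_Suc_Suc power_Suc)
  then have success_deleted: "(real k + 1) * bin_pmf (Suc j) a (Suc k) = (real j + 1) * a * bin_pmf j a k"
    unfolding bin_pmf_def by (simp only: mult_ac)
  have "(real j + 1 - real k) / (real j + 1) * bin_pmf (Suc j) a k
     + (real k + 1) / (real j + 1) * bin_pmf (Suc j) a (Suc k)
     = ((real j + 1 - real k) * bin_pmf (Suc j) a k + (real k + 1) * bin_pmf (Suc j) a (Suc k))
       / (real j + 1)"
    by (simp only: times_divide_eq_left add_divide_distrib[symmetric])
  also have "\<dots> = (real j + 1) * bin_pmf j a k / (real j + 1)"
    unfolding failure_deleted success_deleted by (simp add: algebra_simps)
  also have "\<dots> = bin_pmf j a k"
    by (simp add: add_pos_nonneg)
  finally show ?thesis ..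
qed

lemma sum_abs_thinning_le:
  fixes d :: "nat \<Rightarrow> real"
  shows "(\<Sum>k\<le>j. \<bar>(real j + 1 - real k) / (real j + 1) * d k
                 + (real k + 1) / (real j + 1) * d (Suc k)\<bar>)
    \<le> (\<Sum>k\<le>Suc j. \<bar>d k\<bar>)"
proof -
  define \<alpha> where "\<alpha> k = (real j + 1 - real k) / (real j + 1)" for k
  define \<beta> where "\<beta> k = real k / (real j + 1)" for k
  have "(\<Sum>k\<le>j. \<bar>\<alpha> k * d k + \<beta> (Suc k) * d (Suc k)\<bar>)
      \<le> (\<Sum>k\<le>j. \<alpha> k * \<bar>d k\<bar> + \<beta> (Suc k) * \<bar>d (Suc k)\<bar>)"
  proof (intro sum_mono)
    fix k assume "k \<in> {..j}"
    then have "\<alpha> k \<ge> 0" "\<beta> (Suc k) \<ge> 0"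
      by (auto simp: \<alpha>_def \<beta>_def)
    then show "\<bar>\<alpha> k * d k + \<beta> (Suc k) * d (Suc k)\<bar>
        \<le> \<alpha> k * \<bar>d k\<bar> + \<beta> (Suc k) * \<bar>d (Suc k)\<bar>"
      by (metis abs_mult abs_of_nonneg abs_triangle_ineq)
  qed
  also have "\<dots> = (\<Sum>k\<le>j. \<alpha> k * \<bar>d k\<bar>) + (\<Sum>k\<le>j. \<beta> (Suc k) * \<bar>d (Suc k)\<bar>)"
    by (rule sum.distrib)
  also have "(\<Sum>k\<le>j. \<alpha> k * \<bar>d k\<bar>) = (\<Sum>k\<le>Suc j. \<alpha> k * \<bar>d k\<bar>)"
    by (simp add: \<alpha>_def)
  also have "(\<Sum>k\<le>j. \<beta> (Suc k) * \<bar>d (Suc k)\<bar>) = (\<Sum>k\<le>Suc j. \<beta> k * \<bar>d k\<bar>)"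
    by (subst sum.atMost_Suc_shift) (simp add: \<beta>_def)
  also have "(\<Sum>k\<le>Suc j. \<alpha> k * \<bar>d k\<bar>) + (\<Sum>k\<le>Suc j. \<beta> k * \<bar>d k\<bar>)
      = (\<Sum>k\<le>Suc j. \<bar>d k\<bar>)"
  proof -
    have "real j + 1 \<noteq> 0"
      by (simp add: add_pos_nonneg)
    then have "\<alpha> k + \<beta> k = 1" for k
      by (simp add: \<alpha>_def \<beta>_def flip: add_divide_distrib)
    then show ?thesis
      unfolding sum.distrib[symmetric] distrib_right[symmetric] by simp
  qed
  finally show ?thesis
    by (simp add: \<alpha>_def \<beta>_def add.commute)
qed

lemma tv_bin_le_Suc: "tv_bin j a b \<le> tv_bin (Suc j) a b"
proof -
  define d where "d k = bin_pmf (Suc j) a k - bin_pmf (Suc j) b k" for k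
  have "bin_pmf j a k - bin_pmf j b k
      = (real j + 1 - real k) / (real j + 1) * d k + (real k + 1) / (real j + 1) * d (Suc k)"
    if "k \<le> j" for k
    by (subst (1 2) bin_pmf_thinning[OF that]) (simp add: d_def right_diff_distrib)
  then have "(\<Sum>k\<le>j. \<bar>bin_pmf j a k - bin_pmf j b k\<bar>) \<le> (\<Sum>k\<le>Suc j. \<bar>d k\<bar>)"
    using sum_abs_thinning_le[of j d] by simp
  then show ?thesis
    by (simp add: tv_bin_def d_def atLeast0AtMost)
qed

lemma tv_bin_mono:
  assumes "j \<le> j'"
  shows "tv_bin j a b \<le> tv_bin j' a b"
  using assms
proof (induction j' rule: dec_induct)
  case (step i)
  then show ?case
    using tv_bin_le_Suc[of i a b] by simp
qed simp

lemma tv_bin_le_ratio: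
  assumes "0 \<le> a" "a \<le> 1" "0 \<le> b" "b \<le> 1" "m \<ge> 1"
  shows "tv_bin j a b \<le> (real j / real m + 1) * tv_bin m a b"
proof -
  have "j \<le> (j div m + 1) * m"
    using dividend_less_div_times[of m j] assms(5) by simp
  then have "tv_bin j a b \<le> tv_bin ((j div m + 1) * m) a b"
    by (rule tv_bin_mono)
  also have "\<dots> \<le> real (j div m + 1) * tv_bin m a b"
    by (rule tv_bin_mult_le[OF assms(1-4)])
  also have "\<dots> \<le> (real j / real m + 1) * tv_bin m a b"
  proof (intro mult_right_mono tv_bin_nonneg)
    have "real (j div m) * real m \<le> real j"
      by (simp flip: of_nat_mult)
    then show "real (j div m + 1) \<le> real j / real m + 1"
      using assms(5) by (simp add: field_simps)
  qed
  finally show ?thesis .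
qed

lemma bern_pgf_mix_power:
  "bern_pgf (l * a + (1 - l) * c) ^ n
    = (\<Sum>k\<le>n. smult (bin_pmf n l k) (bern_pgf a ^ k * bern_pgf c ^ (n - k)))"
proof -
  have "bern_pgf (l * a + (1 - l) * c) = smult l (bern_pgf a) + smult (1 - l) (bern_pgf c)"
    by (simp add: bern_pgf_def algebra_simps)
  then have "bern_pgf (l * a + (1 - l) * c) ^ n
    = (\<Sum>k\<le>n. of_nat (n choose k) * smult l (bern_pgf a) ^ k * smult (1 - l) (bern_pgf c) ^ (n - k))"
    by (simp only: binomial_ring)
  also have "\<dots> = (\<Sum>k\<le>n. smult (bin_pmf n l k) (bern_pgf a ^ k * bern_pgf c ^ (n - k)))"
    by (intro sum.cong refl)
      (simp add: bin_pmf_def smult_power of_nat_poly mult_smult_left mult_smult_right mult_ac)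
  finally show ?thesis .
qed

lemma tv_bin_mix_le:
  assumes "0 \<le> a" "a \<le> 1" "0 \<le> b" "b \<le> 1" "0 \<le> c" "c \<le> 1" "1 \<le> m" "m + k = n"
  shows "tv_bin n ((real m * a + real k * c) / real n) ((real m * b + real k * c) / real n)
    \<le> 2 * tv_bin m a b"
proof -
  let ?P = bern_pgf
  define l where "l = real m / real n"
  have mix: "(real m * x + real k * c) / real n = l * x + (1 - l) * c" for x
    using assms(7,8) by (auto simp: l_def field_simps)
  have w: "bin_pmf n l j \<ge> 0" for j
    using assms(7,8) by (simp add: l_def bin_pmf_def)
  have "?P (l * a + (1 - l) * c) ^ n - ?P (l * b + (1 - l) * c) ^ n
      = (\<Sum>j\<le>n. smult (bin_pmf n l j) ((?P a ^ j - ?P b ^ j) * ?P c ^ (n - j)))"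
    unfolding bern_pgf_mix_power sum_subtractf[symmetric]
    by (intro sum.cong refl) (simp add: smult_diff_right left_diff_distrib)
  then have "2 * tv_bin n (l * a + (1 - l) * c) (l * b + (1 - l) * c)
      = poly_l1_norm (\<Sum>j\<le>n. smult (bin_pmf n l j) ((?P a ^ j - ?P b ^ j) * ?P c ^ (n - j)))"
    by (simp add: tv_bin_eq_poly_l1_norm)
  also have "\<dots> \<le> (\<Sum>j\<le>n. bin_pmf n l j * poly_l1_norm ((?P a ^ j - ?P b ^ j) * ?P c ^ (n - j)))"
    by (rule order_trans[OF poly_l1_norm_sum_le]) (simp add: poly_l1_norm_smult w)
  also have "\<dots> \<le> (\<Sum>j\<le>n. bin_pmf n l j * (2 * ((real j / real m + 1) * tv_bin m a b)))"
  proof (intro sum_mono mult_left_mono w)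
    fix j
    show "poly_l1_norm ((?P a ^ j - ?P b ^ j) * ?P c ^ (n - j)) \<le> 2 * ((real j / real m + 1) * tv_bin m a b)"
      using poly_l1_norm_bern_pgf_diff_mult_le[OF assms(5,6), of a j b "n - j"]
        tv_bin_le_ratio[OF assms(1-4,7), of j] by simp
  qed
  also have "\<dots> = 2 * tv_bin m a b
      * ((\<Sum>j\<le>n. bin_pmf n l j * real j) / real m + (\<Sum>j\<le>n. bin_pmf n l j))"
    by (simp add: algebra_simps sum.distrib sum_distrib_left sum_divide_distrib)
  also have "\<dots> = 4 * tv_bin m a b"
    using assms(7,8) by (simp add: sum_bin_pmf sum_bin_pmf_times_k l_def)
  finally show ?thesis
    by (simp add: mix)
qed

lemma avg_bounds:
  assumes "\<And>i. i \<in> A \<Longrightarrow> 0 \<le> p i \<and> p i \<le> 1"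
  shows "0 \<le> avg p A" "avg p A \<le> 1"
proof -
  have "0 \<le> sum p A" "sum p A \<le> real (card A)"
    using assms sum_bounded_above[of A p 1] by (auto intro: sum_nonneg)
  then show "0 \<le> avg p A" "avg p A \<le> 1"
    by (auto simp: avg_def divide_le_eq_1)
qed

lemma card_mult_avg:
  assumes "finite A"
  shows "real (card A) * avg p A = sum p A"
  using assms by (cases "A = {}") (simp_all add: avg_def)

lemma avg_Un_disjoint:
  assumes "finite I" "finite J" "I \<inter> J = {}"
  shows "avg p (I \<union> J) = (real (card I) * avg p I + real (card J) * avg p J) / real (card (I \<union> J))"
  using assms by (simp add: card_mult_avg sum.union_disjoint avg_def)

theorem lemma4:
  fixes n :: nat and p q :: "nat \<Rightarrow> real" and I J :: "nat set"
  assumes "n \<ge> 1"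
    and "\<And>i. i \<in> {1..n} \<Longrightarrow> 0 \<le> p i \<and> p i \<le> 1"
    and "\<And>i. i \<in> {1..n} \<Longrightarrow> 0 \<le> q i \<and> q i \<le> 1"
    and "I \<union> J = {1..n}" and "I \<inter> J = {}"
    and "I \<noteq> {}" and "J \<noteq> {}"
  shows "delta p q {1..n} \<le> 2 * (delta p q I + delta p q J)"
proof -
  have fin: "finite I" "finite J"
    using assms(4) by (metis finite_Un finite_atLeastAtMost)+
  then have cards: "card I + card J = n" "card I \<ge> 1" "card J \<ge> 1"
    using assms(4-7) card_Un_disjoint[of I J] by (auto simp: Suc_le_eq card_gt_0_iff)
  have avg_N: "avg r {1..n} = (real (card I) * avg r I + real (card J) * avg r J) / real n" for r
    using avg_Un_disjoint[OF fin assms(5), of r] by (simp add: assms(4))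
  have unit: "0 \<le> r i \<and> r i \<le> 1" if "r \<in> {p, q}" "i \<in> I \<union> J" for r i
    using that assms(2-4) by auto
  have bounds: "0 \<le> avg r A" "avg r A \<le> 1" if "r \<in> {p, q}" "A \<in> {I, J}" for r A
    using that by (auto intro!: avg_bounds unit)
  let ?z = "(real (card I) * avg q I + real (card J) * avg p J) / real n"
  have "delta p q {1..n} \<le> tv_bin n (avg p {1..n}) ?z + tv_bin n ?z (avg q {1..n})"
    by (simp add: delta_def tv_bin_triangle)
  also have "\<dots> \<le> 2 * delta p q I + 2 * delta p q J"
  proof (rule add_mono)
    show "tv_bin n (avg p {1..n}) ?z \<le> 2 * delta p q I"
      unfolding avg_N delta_def using bounds cards by (intro tv_bin_mix_le) auto
    show "tv_bin n ?z (avg q {1..n}) \<le> 2 * delta p q J"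
      unfolding avg_N delta_def add.commute[of "real (card I) * _"] using bounds cards
      by (intro tv_bin_mix_le) auto
  qed
  finally show ?thesis
    by simp
qed

end
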